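(* Let $\mathbb A_V=(A,V,\psi_V^A,\sigma_V^A)$ and $\mathbb A_W=(A,W,\psi_W^A,\sigma_W^A)$ be two quadruples (with the same monoid $A$), each satisfying the twisted condition and the cocycle condition, and suppose there exist a link morphism $\Delta_{V\otimes W}:V\otimes W\to V\otimes W$ and a twisting morphism $\tau_W^V:W\otimes V\to V\otimes W$ between them. Define $$\sigma_{V\otimes W}^A=(\mu_A\otimes V\otimes W)\circ(A\otimes\psi_V^A\otimes W)\circ(\sigma_V^A\otimes\sigma_W^A)\circ(V\otimes\tau_W^V\otimes W):V\otimes W\otimes V\otimes W\to A\otimes V\otimes W,$$ and assume $\sigma_{V\otimes W}^A=\sigma_{V\otimes W}^A\circ(\Delta_{V\otimes W}\otimes V\otimes W)$, $\sigma_{V\otimes W}^A=\sigma_{V\otimes W}^A\circ(V\otimes W\otimes\Delta_{V\otimes W})$ and $\sigma_{V\otimes W}^A=(A\otimes\Delta_{V\otimes W})\circ\sigma_{V\otimes W}^A$. Then the quadruple $\mathbb A_{V\otimes W}=(A,V\otimes W,\psi_{V\otimes W}^A,\sigma_{V\otimes W}^A)$ satisfies the twisted condition, the cocycle condition and $\nabla_{A\otimes V\otimes W}\circ\sigma_{V\otimes W}^A=\sigma_{V\otimes W}^A$. Consequently $(A\otimes V\otimes W,\mu_{A\otimes V\otimes W})$ is a weak crossed product, where $$\mu_{A\otimes V\otimes W}=(\mu_A\otimes V\otimes W)\circ(\mu_A\otimes\sigma_{V\otimes W}^A)\circ(A\otimes\psi_{V\otimes W}^A\otimes V\otimes W).$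$
   Context: $\mathcal C$ is a strict monoidal category with tensor product $\otimes$ and unit object $K$, in which every idempotent morphism splits; for an object $X$ and a morphism $f$, $X\otimes f$ means $id_X\otimes f$ and $f\otimes X$ means $f\otimes id_X$. A monoid $(A,\eta_A,\mu_A)$ is an object with unit and associative unital product. A quadruple $\mathbb A_V=(A,V,\psi_V^A,\sigma_V^A)$ consists of a monoid $A$, an object $V$, and morphisms $\psi_V^A:V\otimes A\to A\otimes V$, $\sigma_V^A:V\otimes V\to A\otimes V$ such that $(\mu_A\otimes V)\circ(A\otimes\psi_V^A)\circ(\psi_V^A\otimes A)=\psi_V^A\circ(V\otimes\mu_A)$; put $\nabla_{A\otimes V}=(\mu_A\otimes V)\circ(A\otimes\psi_V^A)\circ(A\otimes V\otimes\eta_A)$ (an idempotent), and it is a standing assumption that $\nabla_{A\otimes V}\circ\sigma_V^A=\sigma_V^A$. Twisted condition: $(\mu_A\otimes V)\circ(A\otimes\psi_V^A)\circ(\sigma_V^A\otimes A)=(\mu_A\otimes V)\circ(A\otimes\sigma_V^A)\circ(\psi_V^A\otimes V)\circ(V\otimes\psi_V^A)$. Cocycle condition: $(\mu_A\otimes V)\circ(A\otimes\sigma_V^A)\circ(\sigma_V^A\otimes V)=(\mu_A\otimes V)\circ(A\otimes\sigma_V^A)\circ(\psi_V^A\otimes V)\circ(V\otimes\sigma_V^A)$. If both hold, $(A\otimes V,\mu_{A\otimes V})$ with $\mu_{A\otimes V}=(\mu_A\otimes V)\circ(\mu_A\otimes\sigma_V^A)\circ(A\otimes\psi_V^A\otimes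 V)$ is called a weak crossed product (this product is then associative). Link morphism: given quadruples $\mathbb A_V,\mathbb A_W$ and $\Delta_{V\otimes W}:V\otimes W\to V\otimes W$, put $\psi_{V\otimes W}^A=(\psi_V^A\otimes W)\circ(V\otimes\psi_W^A)\circ(\Delta_{V\otimes W}\otimes A)$ and $\nabla_{A\otimes V\otimes W}=(\mu_A\otimes V\otimes W)\circ(A\otimes\psi_{V\otimes W}^A)\circ(A\otimes V\otimes W\otimes\eta_A)$; $\Delta_{V\otimes W}$ is a link morphism if $\psi_{V\otimes W}^A=(A\otimes\Delta_{V\otimes W})\circ\psi_{V\otimes W}^A$ and $\psi_{V\otimes W}^A=\nabla_{A\otimes V\otimes W}\circ(\psi_V^A\otimes W)\circ(V\otimes\psi_W^A)$. Twisting morphism: $\tau_W^V:W\otimes V\to V\otimes W$ such that (i) $(\psi_V^A\otimes W)\circ(V\otimes\psi_W^A)\circ(\tau_W^V\otimes A)=(A\otimes\tau_W^V)\circ(\psi_W^A\otimes V)\circ(W\otimes\psi_V^A)$; (ii) $(\mu_A\otimes V\otimes W)\circ(A\otimes\sigma_V^A\otimes W)\circ(\psi_V^A\otimes\tau_W^V)\circ(V\otimes\sigma_W^A\otimes V)\circ(\tau_W^V\otimes W\otimes V)=(\mu_A\otimes V\otimes W)\circ(A\otimes\psi_V^A\otimes W)\circ(A\otimes V\otimes\sigma_W^A)\circ(A\otimes\tau_W^V\otimes W)\circ(\psi_W^A\otimes V\otimes W)\circ(W\otimes\sigma_V^A\otimes W)\circ(W\otimes V\otimes\tau_W^V)$.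 The twisted and cocycle conditions for $\mathbb A_{V\otimes W}$ are the same formulas with $V$ replaced by $V\otimes W$. *)

theory Defs
  imports Main
begin

text \<open>A (small) category with a strict monoidal structure, presented by
  objects of type 'o and morphisms of type 'm.  c_arr singles out the
  morphisms; c_dom, c_cod are source and target; c_cmp g f is the composite
  g after f; c_idm X is the identity of X; c_tobj and c_tmor are the tensor
  product on objects and morphisms; c_unit is the unit object K.\<close>

record ('o, 'm) smcat =
  c_arr  :: "'m \<Rightarrow> bool"
  c_dom  :: "'m \<Rightarrow> 'o"
  c_cod  :: "'m \<Rightarrow> 'o"
  c_cmp  :: "'m \<Rightarrow> 'm \<Rightarrow> 'm"
  c_idm  :: "'o \<Rightarrow> 'm"
  c_tobj :: "'o \<Rightarrow> 'o \<Rightarrow> 'o"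
  c_tmor :: "'m \<Rightarrow> 'm \<Rightarrow> 'm"
  c_unit :: "'o"

locale strict_monoidal_cat =
  fixes C :: "('o, 'm) smcat"
  assumes id_arr: "c_arr C (c_idm C X)"
    and id_dom: "c_dom C (c_idm C X) = X"
    and id_cod: "c_cod C (c_idm C X) = X"
    and cmp_arr: "\<lbrakk>c_arr C f; c_arr C g; c_dom C g = c_cod C f\<rbrakk> \<Longrightarrow>
        c_arr C (c_cmp C g f) \<and> c_dom C (c_cmp C g f) = c_dom C f \<and> c_cod C (c_cmp C g f) = c_cod C g"
    and cmp_id_right: "c_arr C f \<Longrightarrow> c_cmp C f (c_idm C (c_dom C f)) = f"
    and cmp_id_left: "c_arr C f \<Longrightarrow> c_cmp C (c_idm C (c_cod C f)) f = f"
    and cmp_assoc: "\<lbrakk>c_arr C f; c_arr C g; c_arr C h; c_dom C g = c_cod C f; c_dom C h = c_cod C g\<rbrakk> \<Longrightarrow>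
        c_cmp C h (c_cmp C g f) = c_cmp C (c_cmp C h g) f"
    and tmor_arr: "\<lbrakk>c_arr C f; c_arr C g\<rbrakk> \<Longrightarrow>
        c_arr C (c_tmor C f g) \<and> c_dom C (c_tmor C f g) = c_tobj C (c_dom C f) (c_dom C g)
        \<and> c_cod C (c_tmor C f g) = c_tobj C (c_cod C f) (c_cod C g)"
    and tmor_id: "c_tmor C (c_idm C X) (c_idm C Y) = c_idm C (c_tobj C X Y)"
    and interchange: "\<lbrakk>c_arr C f; c_arr C g; c_arr C f'; c_arr C g'; c_dom C g = c_cod C f; c_dom C g' = c_cod C f'\<rbrakk> \<Longrightarrow>
        c_tmor C (c_cmp C g f) (c_cmp C g' f') = c_cmp C (c_tmor C g g') (c_tmor C f f')"
    and tobj_assoc: "c_tobj C (c_tobj C X Y) Z = c_tobj C X (c_tobj C Y Z)"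
    and tobj_unit_left: "c_tobj C (c_unit C) X = X"
    and tobj_unit_right: "c_tobj C X (c_unit C) = X"
    and tmor_assoc: "\<lbrakk>c_arr C f; c_arr C g; c_arr C h\<rbrakk> \<Longrightarrow>
        c_tmor C (c_tmor C f g) h = c_tmor C f (c_tmor C g h)"
    and tmor_unit_left: "c_arr C f \<Longrightarrow> c_tmor C (c_idm C (c_unit C)) f = f"
    and tmor_unit_right: "c_arr C f \<Longrightarrow> c_tmor C f (c_idm C (c_unit C)) = f"
    and idempotents_split: "\<lbrakk>c_arr C e; c_dom C e = c_cod C e; c_cmp C e e = e\<rbrakk> \<Longrightarrow>
        \<exists>Y p i. c_arr C p \<and> c_dom C p = c_dom C e \<and> c_cod C p = Y \<and>
                c_arr C i \<and> c_dom C i = Y \<and> c_cod C i = c_dom C e \<and>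
                c_cmp C p i = c_idm C Y \<and> c_cmp C i p = e"
begin

abbreviation cmp (infixr "\<cdot>" 55) where "g \<cdot> f \<equiv> c_cmp C g f"
abbreviation tm (infixr "\<otimes>" 70) where "f \<otimes> g \<equiv> c_tmor C f g"
abbreviation to (infixr "\<odot>" 70) where "X \<odot> Y \<equiv> c_tobj C X Y"
abbreviation I where "I X \<equiv> c_idm C X"
abbreviation K where "K \<equiv> c_unit C"

definition hom :: "'m \<Rightarrow> 'o \<Rightarrow> 'o \<Rightarrow> bool" where
  "hom f X Y \<longleftrightarrow> c_arr C f \<and> c_dom C f = X \<and> c_cod C f = Y"

definition monoid :: "'o \<Rightarrow> 'm \<Rightarrow> 'm \<Rightarrow> bool" where
  "monoid A eta mu \<longleftrightarrow> hom eta K A \<and> hom mu (A \<odot> A) A \<and>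
     mu \<cdot> (mu \<otimes> I A) = mu \<cdot> (I A \<otimes> mu) \<and>
     mu \<cdot> (eta \<otimes> I A) = I A \<and> mu \<cdot> (I A \<otimes> eta) = I A"

definition nabla :: "'o \<Rightarrow> 'm \<Rightarrow> 'm \<Rightarrow> 'o \<Rightarrow> 'm \<Rightarrow> 'm" where
  "nabla A eta mu V psi = (mu \<otimes> I V) \<cdot> (I A \<otimes> psi) \<cdot> (I (A \<odot> V) \<otimes> eta)"

definition quadruple :: "'o \<Rightarrow> 'm \<Rightarrow> 'm \<Rightarrow> 'o \<Rightarrow> 'm \<Rightarrow> 'm \<Rightarrow> bool" where
  "quadruple A eta mu V psi sigma \<longleftrightarrow> monoid A eta mu \<and>
     hom psi (V \<odot> A) (A \<odot> V) \<and> hom sigma (V \<odot> V) (A \<odot> V) \<and>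
     (mu \<otimes> I V) \<cdot> (I A \<otimes> psi) \<cdot> (psi \<otimes> I A) = psi \<cdot> (I V \<otimes> mu) \<and>
     nabla A eta mu V psi \<cdot> sigma = sigma"

definition twisted :: "'o \<Rightarrow> 'm \<Rightarrow> 'm \<Rightarrow> 'o \<Rightarrow> 'm \<Rightarrow> 'm \<Rightarrow> bool" where
  "twisted A eta mu V psi sigma \<longleftrightarrow>
     (mu \<otimes> I V) \<cdot> (I A \<otimes> psi) \<cdot> (sigma \<otimes> I A) =
     (mu \<otimes> I V) \<cdot> (I A \<otimes> sigma) \<cdot> (psi \<otimes> I V) \<cdot> (I V \<otimes> psi)"

definition cocycle :: "'o \<Rightarrow> 'm \<Rightarrow> 'm \<Rightarrow> 'o \<Rightarrow> 'm \<Rightarrow> 'm \<Rightarrow> bool" where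
  "cocycle A eta mu V psi sigma \<longleftrightarrow>
     (mu \<otimes> I V) \<cdot> (I A \<otimes> sigma) \<cdot> (sigma \<otimes> I V) =
     (mu \<otimes> I V) \<cdot> (I A \<otimes> sigma) \<cdot> (psi \<otimes> I V) \<cdot> (I V \<otimes> sigma)"

definition wcp_product :: "'o \<Rightarrow> 'm \<Rightarrow> 'm \<Rightarrow> 'o \<Rightarrow> 'm \<Rightarrow> 'm \<Rightarrow> 'm" where
  "wcp_product A eta mu V psi sigma =
     (mu \<otimes> I V) \<cdot> (mu \<otimes> sigma) \<cdot> (I A \<otimes> psi \<otimes> I V)"

text \<open>(A (x) V, mu_{A (x) V}) is a weak crossed product: by definition, the
  twisted and cocycle conditions hold for the quadruple.\<close>
definition weak_crossed_product :: "'o \<Rightarrow> 'm \<Rightarrow> 'm \<Rightarrow> 'o \<Rightarrow> 'm \<Rightarrow> 'm \<Rightarrow> bool" where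
  "weak_crossed_product A eta mu V psi sigma \<longleftrightarrow>
     quadruple A eta mu V psi sigma \<and> twisted A eta mu V psi sigma \<and> cocycle A eta mu V psi sigma"

definition psi_tensor :: "'o \<Rightarrow> 'o \<Rightarrow> 'o \<Rightarrow> 'm \<Rightarrow> 'm \<Rightarrow> 'm \<Rightarrow> 'm" where
  "psi_tensor A V W psiV psiW Delta = (psiV \<otimes> I W) \<cdot> (I V \<otimes> psiW) \<cdot> (Delta \<otimes> I A)"

definition link_morphism ::
  "'o \<Rightarrow> 'm \<Rightarrow> 'm \<Rightarrow> 'o \<Rightarrow> 'm \<Rightarrow> 'o \<Rightarrow> 'm \<Rightarrow> 'm \<Rightarrow> bool" where
  "link_morphism A eta mu V psiV W psiW Delta \<longleftrightarrow>
     hom Delta (V \<odot> W) (V \<odot> W) \<and>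
     psi_tensor A V W psiV psiW Delta = (I A \<otimes> Delta) \<cdot> psi_tensor A V W psiV psiW Delta \<and>
     psi_tensor A V W psiV psiW Delta =
       nabla A eta mu (V \<odot> W) (psi_tensor A V W psiV psiW Delta) \<cdot> (psiV \<otimes> I W) \<cdot> (I V \<otimes> psiW)"

definition twisting_morphism ::
  "'o \<Rightarrow> 'm \<Rightarrow> 'o \<Rightarrow> 'm \<Rightarrow> 'm \<Rightarrow> 'o \<Rightarrow> 'm \<Rightarrow> 'm \<Rightarrow> 'm \<Rightarrow> bool" where
  "twisting_morphism A mu V psiV sigmaV W psiW sigmaW tau \<longleftrightarrow>
     hom tau (W \<odot> V) (V \<odot> W) \<and>
     (psiV \<otimes> I W) \<cdot> (I V \<otimes> psiW) \<cdot> (tau \<otimes> I A) = (I A \<otimes> tau) \<cdot> (psiW \<otimes> I V) \<cdot> (I W \<otimes> psiV) \<and>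
     (mu \<otimes> I V \<otimes> I W) \<cdot> (I A \<otimes> sigmaV \<otimes> I W) \<cdot> (psiV \<otimes> tau) \<cdot> (I V \<otimes> sigmaW \<otimes> I V) \<cdot> (tau \<otimes> I W \<otimes> I V)
   = (mu \<otimes> I V \<otimes> I W) \<cdot> (I A \<otimes> psiV \<otimes> I W) \<cdot> (I A \<otimes> I V \<otimes> sigmaW) \<cdot> (I A \<otimes> tau \<otimes> I W)
       \<cdot> (psiW \<otimes> I V \<otimes> I W) \<cdot> (I W \<otimes> sigmaV \<otimes> I W) \<cdot> (I W \<otimes> I V \<otimes> tau)"

definition sigma_tensor ::
  "'o \<Rightarrow> 'm \<Rightarrow> 'o \<Rightarrow> 'm \<Rightarrow> 'm \<Rightarrow> 'o \<Rightarrow> 'm \<Rightarrow> 'm \<Rightarrow> 'm" where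
  "sigma_tensor A mu V psiV sigmaV W sigmaW tau =
     (mu \<otimes> I V \<otimes> I W) \<cdot> (I A \<otimes> psiV \<otimes> I W) \<cdot> (sigmaV \<otimes> sigmaW) \<cdot> (I V \<otimes> tau \<otimes> I W)"

end

end

theory Submission
  imports Defs
begin

text \<open>
  Each identity to be proved is an equality between composites of whiskered structure maps, that is,
  between string diagrams on strands labelled A, V and W.  Such a composite is represented as a
  chain of layers id (x) f (x) id, and two diagrams are shown equal by two kinds of moves:
  interchanging adjacent layers that act on disjoint strands, and replacing a whiskered block of
  layers by another one that a hypothesis declares equal (associativity of mu, compatibility of
  psi with mu, the twisted and cocycle conditions for V and W, the two conditions on tau, and the
  invariance of psi and sigma of V (x) W under Delta).  The nabla-invariance of sigma for V (x) W is inherited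
  from that of sigma for W alone.
\<close>

section \<open>String diagrams in a strict monoidal category\<close>

context strict_monoidal_cat
begin

declare id_arr[simp] id_dom[simp] id_cod[simp] tobj_unit_left[simp] tobj_unit_right[simp]
  tobj_assoc[simp] tmor_id[simp]

lemma arr_comp[simp]: "c_arr C f \<Longrightarrow> c_arr C g \<Longrightarrow> c_dom C g = c_cod C f \<Longrightarrow> c_arr C (g \<cdot> f)"
  using cmp_arr by blast

lemma dom_comp[simp]:
  "c_arr C f \<Longrightarrow> c_arr C g \<Longrightarrow> c_dom C g = c_cod C f \<Longrightarrow> c_dom C (g \<cdot> f) = c_dom C f"
  using cmp_arr by blast

lemma cod_comp[simp]:
  "c_arr C f \<Longrightarrow> c_arr C g \<Longrightarrow> c_dom C g = c_cod C f \<Longrightarrow> c_cod C (g \<cdot> f) = c_cod C g"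
  using cmp_arr by blast

lemma arr_tensor[simp]: "c_arr C f \<Longrightarrow> c_arr C g \<Longrightarrow> c_arr C (f \<otimes> g)"
  using tmor_arr by blast

lemma dom_tensor[simp]: "c_arr C f \<Longrightarrow> c_arr C g \<Longrightarrow> c_dom C (f \<otimes> g) = c_dom C f \<odot> c_dom C g"
  using tmor_arr by blast

lemma cod_tensor[simp]: "c_arr C f \<Longrightarrow> c_arr C g \<Longrightarrow> c_cod C (f \<otimes> g) = c_cod C f \<odot> c_cod C g"
  using tmor_arr by blast

lemma comp_assoc':
  "\<lbrakk>c_arr C f; c_arr C g; c_arr C h; c_dom C g = c_cod C f; c_dom C h = c_cod C g\<rbrakk>
    \<Longrightarrow> (h \<cdot> g) \<cdot> f = h \<cdot> (g \<cdot> f)"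
  using cmp_assoc by simp

lemma comp_ident_right: "c_arr C f \<Longrightarrow> c_dom C f = X \<Longrightarrow> f \<cdot> I X = f"
  using cmp_id_right by blast

lemma comp_ident_left: "c_arr C f \<Longrightarrow> c_cod C f = X \<Longrightarrow> I X \<cdot> f = f"
  using cmp_id_left by blast

lemma tensor_assoc': "\<lbrakk>c_arr C f; c_arr C g; c_arr C h\<rbrakk> \<Longrightarrow> (f \<otimes> g) \<otimes> h = f \<otimes> (g \<otimes> h)"
  using tmor_assoc by simp

lemma ident_tensor_ident_tensor: "c_arr C f \<Longrightarrow> I X \<otimes> (I Y \<otimes> f) = I (X \<odot> Y) \<otimes> f"
  using tmor_assoc[of "I X" "I Y" f] by simp

lemma unit_tensor: "c_arr C f \<Longrightarrow> I K \<otimes> f = f"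
  using tmor_unit_left by blast

lemma tensor_unit: "c_arr C f \<Longrightarrow> f \<otimes> I K = f"
  using tmor_unit_right by blast

lemma ident_tensor_comp:
  "c_arr C f \<Longrightarrow> c_arr C g \<Longrightarrow> c_dom C g = c_cod C f \<Longrightarrow> I X \<otimes> (g \<cdot> f) = (I X \<otimes> g) \<cdot> (I X \<otimes> f)"
  using interchange[of "I X" "I X" f g] comp_ident_left[of "I X" X] by simp

lemma comp_tensor_ident:
  "c_arr C f \<Longrightarrow> c_arr C g \<Longrightarrow> c_dom C g = c_cod C f \<Longrightarrow> (g \<cdot> f) \<otimes> I X = (g \<otimes> I X) \<cdot> (f \<otimes> I X)"
  using interchange[of f g "I X" "I X"] comp_ident_left[of "I X" X] by simp

lemma tensor_as_comp:
  "c_arr C f \<Longrightarrow> c_arr C g \<Longrightarrow> f \<otimes> g = (f \<otimes> I (c_cod C g)) \<cdot> (I (c_dom C f) \<otimes> g)"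
  using interchange[of "I (c_dom C f)" f g "I (c_cod C g)"] comp_ident_left[of g] comp_ident_right[of f]
  by simp

lemma tensor_as_comp':
  "c_arr C f \<Longrightarrow> c_arr C g \<Longrightarrow> f \<otimes> g = (I (c_cod C f) \<otimes> g) \<cdot> (f \<otimes> I (c_dom C g))"
  using interchange[of f "I (c_cod C f)" "I (c_dom C g)" g] comp_ident_left[of f] comp_ident_right[of g]
  by simp

lemmas monoidal_simps = comp_assoc' comp_ident_right comp_ident_left tensor_assoc'
  ident_tensor_ident_tensor unit_tensor tensor_unit ident_tensor_comp comp_tensor_ident

fun tensor_list :: "'o list \<Rightarrow> 'o" where
  "tensor_list [] = K"
| "tensor_list (x # xs) = x \<odot> tensor_list xs"

lemma tensor_list_append[simp]: "tensor_list (xs @ ys) = tensor_list xs \<odot> tensor_list ys"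
  by (induction xs) auto

text \<open>A layer (ps, f, ds, cs, qs) stands for id (x) f (x) id with f from the tensor product of ds
  to that of cs, the strands ps to the left and qs to the right.  A chain lists its layers from
  the last applied to the first, starting on the strands X.\<close>

type_synonym ('a, 'b) layer = "'a list \<times> 'b \<times> 'a list \<times> 'a list \<times> 'a list"

fun layer_mor :: "('o, 'm) layer \<Rightarrow> 'm" where
  "layer_mor (ps, f, ds, cs, qs) = I (tensor_list ps) \<otimes> (f \<otimes> I (tensor_list qs))"

fun layer_wf :: "('o, 'm) layer \<Rightarrow> bool" where
  "layer_wf (ps, f, ds, cs, qs) = hom f (tensor_list ds) (tensor_list cs)"

fun layer_dom :: "('o, 'm) layer \<Rightarrow> 'o list" where
  "layer_dom (ps, f, ds, cs, qs) = ps @ ds @ qs"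

fun layer_cod :: "('o, 'm) layer \<Rightarrow> 'o list" where
  "layer_cod (ps, f, ds, cs, qs) = ps @ cs @ qs"

fun whisker :: "'o list \<Rightarrow> 'o list \<Rightarrow> ('o, 'm) layer \<Rightarrow> ('o, 'm) layer" where
  "whisker P Q (ps, f, ds, cs, qs) = (P @ ps, f, ds, cs, qs @ Q)"

fun chain_mor :: "'o list \<Rightarrow> ('o, 'm) layer list \<Rightarrow> 'm" where
  "chain_mor X [] = I (tensor_list X)"
| "chain_mor X (l # ls) = layer_mor l \<cdot> chain_mor X ls"

fun chain_cod :: "'o list \<Rightarrow> ('o, 'm) layer list \<Rightarrow> 'o list" where
  "chain_cod X [] = X"
| "chain_cod X (l # ls) = layer_cod l"

fun chain_wf :: "'o list \<Rightarrow> ('o, 'm) layer list \<Rightarrow> bool" where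
  "chain_wf X [] = True"
| "chain_wf X (l # ls) = (chain_wf X ls \<and> layer_wf l \<and> layer_dom l = chain_cod X ls)"

fun disjoint_layers :: "('o, 'm) layer \<Rightarrow> ('o, 'm) layer \<Rightarrow> bool" where
  "disjoint_layers (ps1, f, df, cf, qs1) (ps2, g, dg, cg, qs2) \<longleftrightarrow>
     length ps2 + length cg \<le> length ps1 \<or> length ps1 + length df \<le> length ps2"

fun swap_layers :: "('o, 'm) layer \<Rightarrow> ('o, 'm) layer \<Rightarrow> ('o, 'm) layer list" where
  "swap_layers (ps1, f, df, cf, qs1) (ps2, g, dg, cg, qs2) =
    (if length ps2 + length cg \<le> length ps1 then
       [(ps2, g, dg, cg, drop (length ps2 + length cg) ps1 @ cf @ qs1),
        (ps2 @ dg @ drop (length ps2 + length cg) ps1, f, df, cf, qs1)]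
     else
       [(ps1 @ cf @ drop (length ps1 + length df) ps2, g, dg, cg, qs2),
        (ps1, f, df, cf, drop (length ps1 + length df) ps2 @ dg @ qs2)])"  declare chain_mor.simps[simp del] layer_mor.simps[simp del] swap_layers.simps[simp del]  lemmas chain_mor_unfold = chain_mor.simps layer_mor.simps monoidal_simps  definition chain_eq :: "'o list \<Rightarrow> ('o, 'm) layer list \<Rightarrow> ('o, 'm) layer list \<Rightarrow> bool" where "chain_eq D xs ys \<longleftrightarrow> chain_wf D xs \<and> chain_wf D ys \<and> chain_cod D xs = chain_cod D ys \<and> chain_mor D xs = chain_mor D ys"  lemma chain_eq_sym: "chain_eq D xs ys \<Longrightarrow> chain_eq D ys xs" unfolding chain_eq_def by auto  lemma layer_mor_hom: "layer_wf l \<Longrightarrow> hom (layer_mor l) (tensor_list (layer_dom l)) (tensor_list (layer_cod l))" by (cases l) (auto simp: layer_mor.simps hom_def)  lemma chain_mor_hom: "chain_wf X ls \<Longrightarrow> hom (chain_mor X ls) (tensor_list X) (tensor_list (chain_cod X ls))" proof (induction ls) case Nil then show ?case by (simp add: chain_mor.simps hom_def) next case (Cons l ls) then have "chain_wf X ls" "layer_wf l" "layer_dom l = chain_cod X ls" by auto with Cons.IH layer_mor_hom[of l] show ?case by (simp add: chain_mor.simps hom_def) qed  lemma chain_cod_append[simp]: "chain_cod X (xs @ ys) = chain_cod (chain_cod X ys) xs" by (cases xs) auto  lemma chain_wf_append[simp]: "chain_wf X (xs @ ys) \<longleftrightarrow> chain_wf X ys \<and> chain_wf (chain_cod X ys)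 xs" by (induction xs) auto  lemma chain_mor_append: "chain_wf X (xs @ ys) \<Longrightarrow> chain_mor X (xs @ ys) = chain_mor (chain_cod X ys) xs \<cdot> chain_mor X ys" proof (induction xs) case Nil then show ?case using chain_mor_hom[of X ys] by (simp add: chain_mor.simps comp_ident_left hom_def) next case (Cons l xs) then have v: "chain_wf X ys" "chain_wf (chain_cod X ys) xs" "layer_wf l" "layer_dom l = chain_cod (chain_cod X ys) xs" by auto have "chain_mor X ((l # xs) @ ys) = layer_mor l \<cdot> (chain_mor (chain_cod X ys) xs \<cdot> chain_mor X ys)" using Cons by (simp add: chain_mor.simps) also have "\<dots> = (layer_mor l \<cdot> chain_mor (chain_cod X ys) xs) \<cdot> chain_mor X ys" using chain_mor_hom[OF v(1)] chain_mor_hom[OF v(2)] layer_mor_hom[OF v(3)] v(4) cmp_assoc by (simp add: hom_def) finally show ?case by (simp add: chain_mor.simps) qed  lemma whisker_Nil_Nil[simp]: "whisker [] [] l = l" by (cases l) simp  lemma map_whisker_Nil_Nil[simp]: "map (whisker [] []) ls = ls" by (simp add: map_idI)  lemma layer_wf_whisker[simp]: "layer_wf (whisker P Q l) = layer_wf l" by (cases l) auto  lemma layer_dom_whisker[simp]: "layer_dom (whisker P Q l) = P @ layer_dom l @ Q" by (cases l) auto  lemma layer_cod_whisker[simp]: "layer_cod (whisker P Q l) = P @ layer_cod l @ Q" by (cases l) auto  lemma chain_wf_whisker: "chain_wf X xs \<Longrightarrow> chain_wf (P @ X @ Q) (map (whisker P Q) xs) \<and> chain_cod (P @ X @ Q)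 (map (whisker P Q) xs) = P @ chain_cod X xs @ Q" by (induction xs) auto  lemma layer_mor_whisker: assumes "layer_wf l" shows "layer_mor (whisker P Q l) = I (tensor_list P) \<otimes> (layer_mor l \<otimes> I (tensor_list Q))" proof (cases l) case (fields ps f ds cs qs) with assms have f: "c_arr C f" by (simp add: hom_def) let ?P = "tensor_list P" and ?ps = "tensor_list ps" and ?qs = "tensor_list qs" and ?Q = "tensor_list Q" have "layer_mor (whisker P Q l) = I (?P \<odot> ?ps) \<otimes> (f \<otimes> (I ?qs \<otimes> I ?Q))" using fields by (simp add: layer_mor.simps del: tobj_assoc) also have "\<dots> = I ?P \<otimes> (I ?ps \<otimes> (f \<otimes> (I ?qs \<otimes> I ?Q)))" using f by (simp add: ident_tensor_ident_tensor del: tobj_assoc tmor_id) also have "\<dots> = I ?P \<otimes> ((I ?ps \<otimes> (f \<otimes> I ?qs)) \<otimes> I ?Q)" using f by (simp add: tensor_assoc' del: tobj_assoc tmor_id) finally show ?thesis using fields by (simp add: layer_mor.simps del: tobj_assoc tmor_id) qed  lemma chain_mor_whisker: "chain_wf X xs \<Longrightarrow> chain_mor (P @ X @ Q) (map (whisker P Q) xs) = I (tensor_list P) \<otimes> (chain_mor X xs \<otimes> I (tensor_list Q))" proof (induction xs) case Nil then show ?case by (simp add: chain_mor.simps del: tobj_assoc) next case (Cons l xs) then have v: "chain_wf X xs" "layer_wf l" "layer_dom l = chain_cod X xs" by auto let ?P = "I (tensor_list P)" and ?Q = "I (tensor_list Q)" note homs = chain_mor_hom[OF v(1), unfolded hom_def]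 layer_mor_hom[OF v(2), unfolded hom_def] have "chain_mor (P @ X @ Q) (map (whisker P Q) (l # xs)) = (?P \<otimes> (layer_mor l \<otimes> ?Q)) \<cdot> (?P \<otimes> (chain_mor X xs \<otimes> ?Q))" using Cons v by (simp add: chain_mor.simps layer_mor_whisker) also have "\<dots> = ?P \<otimes> ((layer_mor l \<otimes> ?Q) \<cdot> (chain_mor X xs \<otimes> ?Q))" using homs v(3) interchange[of ?P ?P] by (simp add: comp_ident_left) also have "\<dots> = ?P \<otimes> ((layer_mor l \<cdot> chain_mor X xs) \<otimes> ?Q)" using homs v(3) interchange[of _ _ ?Q ?Q] by (simp add: comp_ident_left) finally show ?case by (simp add: chain_mor.simps) qed  lemma chain_mor_replace: assumes v: "chain_wf X (pre @ map (whisker P Q) lhs @ post)" and e: "chain_eq D lhs rhs" and c: "chain_cod X post = P @ D @ Q" shows "chain_mor X (pre @ map (whisker P Q) lhs @ post) = chain_mor X (pre @ map (whisker P Q) rhs @ post)" proof - from e have el: "chain_wf D lhs" and er: "chain_wf D rhs" and ec: "chain_cod D lhs = chain_cod D rhs" and eq: "chain_mor D lhs = chain_mor D rhs" unfolding chain_eq_def by auto let ?L = "map (whisker P Q) lhs" and ?R = "map (whisker P Q) rhs" note wl = chain_wf_whisker[OF el, of P Q] and wr = chain_wf_whisker[OF er, of P Q] have vr: "chain_wf X (pre @ ?R @ post)" using v c wl wr ec by simp have "chain_mor X (pre @ ?L @ post) = chain_mor (chain_cod X (?L @ post)) pre \<cdot> (chain_mor (chain_cod X post) ?L \<cdot> chain_mor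 X post)" using v chain_mor_append[of X pre "?L @ post"] chain_mor_append[of X ?L post] by simp also have "\<dots> = chain_mor (chain_cod X (?R @ post)) pre \<cdot> (chain_mor (chain_cod X post) ?R \<cdot> chain_mor X post)" using c chain_mor_whisker[OF el, of P Q] chain_mor_whisker[OF er, of P Q] eq wl wr ec by simp also have "\<dots> = chain_mor X (pre @ ?R @ post)" using vr chain_mor_append[of X pre "?R @ post"] chain_mor_append[of X ?R post] by simp finally show ?thesis . qed  text \<open>The two rules below are applied backwards to a goal chain_mor X xs = R: the block of xs starting after its first n layers is rewritten, P and Q being the strands to the left and right of the block.\<close>  lemma chain_rewrite_at: assumes e: "chain_eq D lhs rhs" and v: "chain_wf X xs" and m: "take (length lhs) (drop n xs) = map (whisker P Q) lhs" and l: "n + length lhs \<le> length xs" and c: "chain_cod X (drop (n + length lhs) xs) = P @ D @ Q" and r: "chain_mor X (take n xs @ map (whisker P Q) rhs @ drop (n + length lhs) xs) = R" shows "chain_mor X xs = R" proof - have xs: "xs = take n xs @ map (whisker P Q) lhs @ drop (n + length lhs) xs" using m l by (metis append_take_drop_id drop_drop add.commute) show ?thesis using chain_mor_replace[of X "take n xs" P Q lhs "drop (n + length lhs) xs" D rhs] v e c xs r by simp qed  lemma layer_mor_interchange: assumes f: "hom f (tensor_list df) (tensor_list cf)" and g: "hom g (tensor_list dg) (tensor_list cg)" shows "layer_mor (ps @ cg @ M, f, df, cf, qs) \<cdot> layer_mor (ps, g, dg, cg, M @ df @ qs) = layer_mor (ps, g, dg, cg, M @ cf @ qs) \<cdot>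 layer_mor (ps @ dg @ M, f, df, cf, qs)" proof - from f have af: "c_arr C f" "c_dom C f = tensor_list df" "c_cod C f = tensor_list cf" by (auto simp: hom_def) from g have ag: "c_arr C g" "c_dom C g = tensor_list dg" "c_cod C g = tensor_list cg" by (auto simp: hom_def) define h where "h = I (tensor_list M) \<otimes> (f \<otimes> I (tensor_list qs))" have ah: "c_arr C h" "c_dom C h = tensor_list M \<odot> (tensor_list df \<odot> tensor_list qs)" "c_cod C h = tensor_list M \<odot> (tensor_list cf \<odot> tensor_list qs)" using af unfolding h_def by (simp_all del: tobj_assoc) have top_left: "layer_mor (ps @ cg @ M, f, df, cf, qs) = I (tensor_list ps) \<otimes> (I (tensor_list cg) \<otimes> h)" using af unfolding h_def by (simp add: layer_mor.simps ident_tensor_ident_tensor del: tobj_assoc tmor_id) have bottom_left: "layer_mor (ps, g, dg, cg, M @ df @ qs) = I (tensor_list ps) \<otimes> (g \<otimes> I (c_dom C h))" using ah by (simp add: layer_mor.simps del: tobj_assoc) have top_right: "layer_mor (ps, g, dg, cg, M @ cf @ qs) = I (tensor_list ps) \<otimes> (g \<otimes> I (c_cod C h))" using ah by (simp add: layer_mor.simps del: tobj_assoc) have bottom_right: "layer_mor (ps @ dg @ M, f, df, cf, qs) = I (tensor_list ps) \<otimes> (I (tensor_list dg) \<otimes> h)" using af unfolding h_def by (simp add: layer_mor.simps ident_tensor_ident_tensor del: tobj_assoc tmor_id) have "layer_mor (ps @ cg @ M, f, df, cf, qs) \<cdot> layer_mor (ps, g, dg, cg, M @ df @ qs) = I (tensor_list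 ps) \<otimes> ((I (tensor_list cg) \<otimes> h) \<cdot> (g \<otimes> I (c_dom C h)))" using top_left bottom_left ah ag interchange[of "I (tensor_list ps)" "I (tensor_list ps)"] by (simp add: comp_ident_left) also have "\<dots> = I (tensor_list ps) \<otimes> ((g \<otimes> I (c_cod C h)) \<cdot> (I (tensor_list dg) \<otimes> h))" using tensor_as_comp[of g h, symmetric] tensor_as_comp'[of g h, symmetric] ag ah by simp also have "\<dots> = layer_mor (ps, g, dg, cg, M @ cf @ qs) \<cdot> layer_mor (ps @ dg @ M, f, df, cf, qs)" using top_right bottom_right ah ag interchange[of "I (tensor_list ps)" "I (tensor_list ps)"] by (simp add: comp_ident_left) finally show ?thesis . qed  lemma chain_mor_two: "layer_wf b \<Longrightarrow> chain_mor (layer_dom b) [a, b] = layer_mor a \<cdot> layer_mor b" using layer_mor_hom[of b] by (simp add: chain_mor.simps comp_ident_right hom_def)  lemma swap_layers_chain_eq: assumes l1: "layer_wf l1" and l2: "layer_wf l2" and d: "layer_dom l1 = layer_cod l2" and dj: "disjoint_layers l1 l2" shows "chain_eq (layer_dom l2) [l1, l2] (swap_layers l1 l2)" proof - obtain ps1 f df cf qs1 where L1: "l1 = (ps1,f,df,cf,qs1)" by (cases l1) obtain ps2 g dg cg qs2 where L2: "l2 = (ps2,g,dg,cg,qs2)" by (cases l2) from l1 L1 have f: "hom f (tensor_list df) (tensor_list cf)" by simp from l2 L2 have g: "hom g (tensor_list dg) (tensor_list cg)" by simp from d L1 L2 have d': "ps1 @ df @ qs1 = ps2 @ cg @ qs2"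 by simp show ?thesis proof (cases "length ps2 + length cg \<le> length ps1") case True define M where "M = drop (length ps2 + length cg) ps1" have "take (length ps2 + length cg) ps1 = ps2 @ cg" using arg_cong[OF d', of "take (length ps2 + length cg)"] True by simp then have p1: "ps1 = ps2 @ cg @ M" unfolding M_def by (metis append_take_drop_id append.assoc) have q2: "qs2 = M @ df @ qs1" using arg_cong[OF d', of "drop (length ps2 + length cg)"] True unfolding M_def by simp have swap: "swap_layers l1 l2 = [(ps2,g,dg,cg,M @ cf @ qs1),
        (ps2 @ dg @ M,f,df,cf,qs1)]"
      using True L1 L2 by (simp add: swap_layers.simps M_def)
    have lk: "layer_wf (ps2 @ dg @ M,f,df,cf,qs1)" using f by simp
    show ?thesis
      unfolding chain_eq_def swap
      using l1 l2 L1 L2 p1 q2 f g layer_mor_interchange[OF f g, of ps2 M qs1]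
        chain_mor_two[of l2 l1] chain_mor_two[OF lk, of "(ps2,g,dg,cg,M @ cf @ qs1)"]
      by (simp add: hom_def)
  next
    case False
    with dj L1 L2 have F: "length ps1 + length df \<le> length ps2" by simp
    define M where "M = drop (length ps1 + length df) ps2"
    have "take (length ps1 + length df) ps2 = ps1 @ df"
      using arg_cong[OF d', of "take (length ps1 + length df)"] F by simp
    then have p2: "ps2 = ps1 @ df @ M" unfolding M_def by (metis append_take_drop_id append.assoc)
    have q1: "qs1 = M @ cg @ qs2"
      using arg_cong[OF d'[symmetric], of "drop (length ps1 + length df)"] F unfolding M_def by simp
    have swap: "swap_layers l1 l2 = [(ps1 @ cf @ M,g,dg,cg,qs2), (ps1,f,df,cf,M @ dg @ qs2)]"
      using False L1 L2 by (simp add: swap_layers.simps M_def)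
    have lk: "layer_wf (ps1,f,df,cf,M @ dg @ qs2)" using f by simp
    show ?thesis
      unfolding chain_eq_def swap
      using l1 l2 L1 L2 p2 q1 f g layer_mor_interchange[OF g f, of ps1 M qs2, symmetric]
        chain_mor_two[of l2 l1] chain_mor_two[OF lk, of "(ps1 @ cf @ M,g,dg,cg,qs2)"]
      by (simp add: hom_def)
  qed
qed

lemma chain_swap_at:
  assumes v: "chain_wf X xs" and l: "Suc n < length xs" and dj: "disjoint_layers (xs ! n) (xs ! Suc n)"
    and r: "chain_mor X (take n xs @ swap_layers (xs ! n) (xs ! Suc n) @ drop (Suc (Suc n)) xs) = R"
  shows "chain_mor X xs = R"
proof -
  have pair: "take 2 (drop n xs) = [xs ! n, xs ! Suc n]"
    using l by (metis Cons_nth_drop_Suc Suc_lessD take_0 take_Suc_Cons numeral_2_eq_2)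
  have "chain_wf (chain_cod X (drop (n + 2) xs)) (take 2 (drop n xs))"
    using v chain_wf_append[of X "take (n + 2) xs" "drop (n + 2) xs"]
    by (metis append_take_drop_id take_drop chain_wf_append add.commute)
  then have h: "layer_wf (xs ! n)" "layer_wf (xs ! Suc n)" "layer_dom (xs ! n) = layer_cod (xs ! Suc n)"
    "chain_cod X (drop (n + 2) xs) = [] @ layer_dom (xs ! Suc n) @ []"
    using pair by simp_all
  show ?thesis
    by (rule chain_rewrite_at[OF swap_layers_chain_eq[OF h(1-3) dj] v, of n "[]" "[]"])
      (use pair l h(4) r in \<open>simp_all add: numeral_2_eq_2\<close>)
qed

end

section \<open>The tensor product of two quadruples\<close>

locale tensor_of_quadruples = strict_monoidal_cat C for C :: "('o, 'm) smcat" +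
  fixes A V W :: 'o and eta mu psiV sigmaV psiW sigmaW Delta tau :: 'm
  assumes quadrupleV: "quadruple A eta mu V psiV sigmaV"
    and quadrupleW: "quadruple A eta mu W psiW sigmaW"
    and twistedV: "twisted A eta mu V psiV sigmaV"
    and cocycleV: "cocycle A eta mu V psiV sigmaV"
    and twistedW: "twisted A eta mu W psiW sigmaW"
    and cocycleW: "cocycle A eta mu W psiW sigmaW"
    and Delta_hom: "hom Delta (V \<odot> W) (V \<odot> W)"
    and psi_tensor_Delta:
      "psi_tensor A V W psiV psiW Delta = (I A \<otimes> Delta) \<cdot> psi_tensor A V W psiV psiW Delta"
    and twisting: "twisting_morphism A mu V psiV sigmaV W psiW sigmaW tau"
    and sigma_Delta_left: "sigma_tensor A mu V psiV sigmaV W sigmaW tau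
           = sigma_tensor A mu V psiV sigmaV W sigmaW tau \<cdot> (Delta \<otimes> I (V \<odot> W))"
    and sigma_Delta_right: "sigma_tensor A mu V psiV sigmaV W sigmaW tau
           = sigma_tensor A mu V psiV sigmaV W sigmaW tau \<cdot> (I (V \<odot> W) \<otimes> Delta)"
    and Delta_sigma: "sigma_tensor A mu V psiV sigmaV W sigmaW tau
           = (I A \<otimes> Delta) \<cdot> sigma_tensor A mu V psiV sigmaV W sigmaW tau"
begin

abbreviation psiVW where "psiVW \<equiv> psi_tensor A V W psiV psiW Delta"
abbreviation sigmaVW where "sigmaVW \<equiv> sigma_tensor A mu V psiV sigmaV W sigmaW tau"

declare swap_layers.simps[simp]

lemma structure_maps_hom[simp]:
  "hom eta K A" "hom mu (A \<odot> A) A" "hom psiV (V \<odot> A) (A \<odot> V)" "hom sigmaV (V \<odot> V) (A \<odot> V)"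
  "hom psiW (W \<odot> A) (A \<odot> W)" "hom sigmaW (W \<odot> W) (A \<odot> W)" "hom Delta (V \<odot> W) (V \<odot> W)"
  "hom tau (W \<odot> V) (V \<odot> W)"
  using quadrupleV quadrupleW Delta_hom twisting
  unfolding quadruple_def monoid_def twisting_morphism_def by auto

lemma structure_maps_arr[simp]:
  "c_arr C eta" "c_dom C eta = K" "c_cod C eta = A"
  "c_arr C mu" "c_dom C mu = A \<odot> A" "c_cod C mu = A"
  "c_arr C psiV" "c_dom C psiV = V \<odot> A" "c_cod C psiV = A \<odot> V"
  "c_arr C sigmaV" "c_dom C sigmaV = V \<odot> V" "c_cod C sigmaV = A \<odot> V"
  "c_arr C psiW" "c_dom C psiW = W \<odot> A" "c_cod C psiW = A \<odot> W"
  "c_arr C sigmaW" "c_dom C sigmaW = W \<odot> W" "c_cod C sigmaW = A \<odot> W"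
  "c_arr C Delta" "c_dom C Delta = V \<odot> W" "c_cod C Delta = V \<odot> W"
  "c_arr C tau" "c_dom C tau = W \<odot> V" "c_cod C tau = V \<odot> W"
  using structure_maps_hom unfolding hom_def by auto

lemma mu_assoc: "mu \<cdot> (mu \<otimes> I A) = mu \<cdot> (I A \<otimes> mu)"
  using quadrupleV unfolding quadruple_def monoid_def by auto

lemma psiV_mu: "(mu \<otimes> I V) \<cdot> (I A \<otimes> psiV) \<cdot> (psiV \<otimes> I A) = psiV \<cdot> (I V \<otimes> mu)"
  using quadrupleV unfolding quadruple_def by auto

lemma psiW_mu: "(mu \<otimes> I W) \<cdot> (I A \<otimes> psiW) \<cdot> (psiW \<otimes> I A) = psiW \<cdot> (I W \<otimes> mu)"
  and nablaW_sigmaW: "nabla A eta mu W psiW \<cdot> sigmaW = sigmaW"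
  using quadrupleW unfolding quadruple_def by auto

lemma tau_psi:
  "(psiV \<otimes> I W) \<cdot> (I V \<otimes> psiW) \<cdot> (tau \<otimes> I A) = (I A \<otimes> tau) \<cdot> (psiW \<otimes> I V) \<cdot> (I W \<otimes> psiV)"
  and tau_sigma:
  "(mu \<otimes> I V \<otimes> I W) \<cdot> (I A \<otimes> sigmaV \<otimes> I W) \<cdot> (psiV \<otimes> tau) \<cdot> (I V \<otimes> sigmaW \<otimes> I V)
       \<cdot> (tau \<otimes> I W \<otimes> I V)
   = (mu \<otimes> I V \<otimes> I W) \<cdot> (I A \<otimes> psiV \<otimes> I W) \<cdot> (I A \<otimes> I V \<otimes> sigmaW) \<cdot> (I A \<otimes> tau \<otimes> I W)
       \<cdot> (psiW \<otimes> I V \<otimes> I W) \<cdot> (I W \<otimes> sigmaV \<otimes> I W) \<cdot> (I W \<otimes> I V \<otimes> tau)"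
  using twisting unfolding twisting_morphism_def by auto

lemma mu_assoc_diag: "chain_eq [A,A,A]
   [([],mu,[A,A],[A],[]), ([],mu,[A,A],[A],[A])]
   [([],mu,[A,A],[A],[]), ([A],mu,[A,A],[A],[])]"
  using mu_assoc unfolding chain_eq_def by (simp add: chain_mor_unfold)

lemma psiV_mu_diag: "chain_eq [V,A,A]
   [([],mu,[A,A],[A],[V]), ([A],psiV,[V,A],[A,V],[]), ([],psiV,[V,A],[A,V],[A])]
   [([],psiV,[V,A],[A,V],[]), ([V],mu,[A,A],[A],[])]"
  using psiV_mu unfolding chain_eq_def by (simp add: chain_mor_unfold)

lemma twistedV_diag: "chain_eq [V,V,A]
   [([],mu,[A,A],[A],[V]), ([A],psiV,[V,A],[A,V],[]), ([],sigmaV,[V,V],[A,V],[A])]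
   [([],mu,[A,A],[A],[V]), ([A],sigmaV,[V,V],[A,V],[]), ([],psiV,[V,A],[A,V],[V]),
    ([V],psiV,[V,A],[A,V],[])]"
  using twistedV unfolding chain_eq_def twisted_def by (simp add: chain_mor_unfold)

lemma cocycleV_diag: "chain_eq [V,V,V]
   [([],mu,[A,A],[A],[V]), ([A],sigmaV,[V,V],[A,V],[]), ([],sigmaV,[V,V],[A,V],[V])]
   [([],mu,[A,A],[A],[V]), ([A],sigmaV,[V,V],[A,V],[]), ([],psiV,[V,A],[A,V],[V]),
    ([V],sigmaV,[V,V],[A,V],[])]"
  using cocycleV unfolding chain_eq_def cocycle_def by (simp add: chain_mor_unfold)

lemma psiW_mu_diag: "chain_eq [W,A,A]
   [([],mu,[A,A],[A],[W]), ([A],psiW,[W,A],[A,W],[]), ([],psiW,[W,A],[A,W],[A])]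
   [([],psiW,[W,A],[A,W],[]), ([W],mu,[A,A],[A],[])]"
  using psiW_mu unfolding chain_eq_def by (simp add: chain_mor_unfold)

lemma nablaW_sigmaW_diag: "chain_eq [W,W]
   [([],mu,[A,A],[A],[W]), ([A],psiW,[W,A],[A,W],[]), ([A,W],eta,[],[A],[]),
    ([],sigmaW,[W,W],[A,W],[])]
   [([],sigmaW,[W,W],[A,W],[])]"
  using nablaW_sigmaW unfolding chain_eq_def nabla_def by (simp add: chain_mor_unfold)

lemma twistedW_diag: "chain_eq [W,W,A]
   [([],mu,[A,A],[A],[W]), ([A],psiW,[W,A],[A,W],[]), ([],sigmaW,[W,W],[A,W],[A])]
   [([],mu,[A,A],[A],[W]), ([A],sigmaW,[W,W],[A,W],[]), ([],psiW,[W,A],[A,W],[W]),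
    ([W],psiW,[W,A],[A,W],[])]"
  using twistedW unfolding chain_eq_def twisted_def by (simp add: chain_mor_unfold)

lemma cocycleW_diag: "chain_eq [W,W,W]
   [([],mu,[A,A],[A],[W]), ([A],sigmaW,[W,W],[A,W],[]), ([],sigmaW,[W,W],[A,W],[W])]
   [([],mu,[A,A],[A],[W]), ([A],sigmaW,[W,W],[A,W],[]), ([],psiW,[W,A],[A,W],[W]),
    ([W],sigmaW,[W,W],[A,W],[])]"
  using cocycleW unfolding chain_eq_def cocycle_def by (simp add: chain_mor_unfold)

lemma tau_psi_diag: "chain_eq [W,V,A]
   [([],psiV,[V,A],[A,V],[W]), ([V],psiW,[W,A],[A,W],[]), ([],tau,[W,V],[V,W],[A])]
   [([A],tau,[W,V],[V,W],[]), ([],psiW,[W,A],[A,W],[V]), ([W],psiV,[V,A],[A,V],[])]"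
  using tau_psi unfolding chain_eq_def by (simp add: chain_mor_unfold)

lemma tau_sigma_diag: "chain_eq [W,V,W,V]
   [([],mu,[A,A],[A],[V,W]), ([A],sigmaV,[V,V],[A,V],[W]), ([],psiV,[V,A],[A,V],[V,W]),
    ([V,A],tau,[W,V],[V,W],[]), ([V],sigmaW,[W,W],[A,W],[V]), ([],tau,[W,V],[V,W],[W,V])]
   [([],mu,[A,A],[A],[V,W]), ([A],psiV,[V,A],[A,V],[W]), ([A,V],sigmaW,[W,W],[A,W],[]),
    ([A],tau,[W,V],[V,W],[W]), ([],psiW,[W,A],[A,W],[V,W]), ([W],sigmaV,[V,V],[A,V],[W]),
    ([W,V],tau,[W,V],[V,W],[])]"
  using tau_sigma unfolding chain_eq_def by (simp add: chain_mor_unfold tensor_as_comp[of psiV tau])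

lemma Delta_psi_diag: "chain_eq [V,W,A]
   [([],psiV,[V,A],[A,V],[W]), ([V],psiW,[W,A],[A,W],[]), ([],Delta,[V,W],[V,W],[A])]
   [([A],Delta,[V,W],[V,W],[]), ([],psiV,[V,A],[A,V],[W]), ([V],psiW,[W,A],[A,W],[]),
    ([],Delta,[V,W],[V,W],[A])]"
  using psi_tensor_Delta unfolding chain_eq_def psi_tensor_def by (simp add: chain_mor_unfold)

lemma sigma_Delta_left_diag: "chain_eq [V,W,V,W]
   [([],mu,[A,A],[A],[V,W]), ([A],psiV,[V,A],[A,V],[W]), ([],sigmaV,[V,V],[A,V],[A,W]),
    ([V,V],sigmaW,[W,W],[A,W],[]), ([V],tau,[W,V],[V,W],[W])]
   [([],mu,[A,A],[A],[V,W]), ([A],psiV,[V,A],[A,V],[W]), ([],sigmaV,[V,V],[A,V],[A,W]),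
    ([V,V],sigmaW,[W,W],[A,W],[]), ([V],tau,[W,V],[V,W],[W]), ([],Delta,[V,W],[V,W],[V,W])]"
  using sigma_Delta_left unfolding chain_eq_def sigma_tensor_def by (simp add: chain_mor_unfold tensor_as_comp[of sigmaV sigmaW])

lemma sigma_Delta_right_diag: "chain_eq [V,W,V,W]
   [([],mu,[A,A],[A],[V,W]), ([A],psiV,[V,A],[A,V],[W]), ([],sigmaV,[V,V],[A,V],[A,W]),
    ([V,V],sigmaW,[W,W],[A,W],[]), ([V],tau,[W,V],[V,W],[W])]
   [([],mu,[A,A],[A],[V,W]), ([A],psiV,[V,A],[A,V],[W]), ([],sigmaV,[V,V],[A,V],[A,W]),
    ([V,V],sigmaW,[W,W],[A,W],[]), ([V],tau,[W,V],[V,W],[W]), ([V,W],Delta,[V,W],[V,W],[])]"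
  using sigma_Delta_right unfolding chain_eq_def sigma_tensor_def by (simp add: chain_mor_unfold tensor_as_comp[of sigmaV sigmaW])

lemma Delta_sigma_diag: "chain_eq [V,W,V,W]
   [([],mu,[A,A],[A],[V,W]), ([A],psiV,[V,A],[A,V],[W]), ([],sigmaV,[V,V],[A,V],[A,W]),
    ([V,V],sigmaW,[W,W],[A,W],[]), ([V],tau,[W,V],[V,W],[W])]
   [([A],Delta,[V,W],[V,W],[]), ([],mu,[A,A],[A],[V,W]), ([A],psiV,[V,A],[A,V],[W]),
    ([],sigmaV,[V,V],[A,V],[A,W]), ([V,V],sigmaW,[W,W],[A,W],[]), ([V],tau,[W,V],[V,W],[W])]"
  using Delta_sigma unfolding chain_eq_def sigma_tensor_def by (simp add: chain_mor_unfold tensor_as_comp[of sigmaV sigmaW])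

lemma psi_tensor_mu_chain: "chain_mor [V,W,A,A]
    [([],psiV,[V,A],[A,V],[W]), ([V],psiW,[W,A],[A,W],[]), ([],Delta,[V,W],[V,W],[A]),
     ([V,W],mu,[A,A],[A],[])]
  = chain_mor [V,W,A,A]
    [([],mu,[A,A],[A],[V,W]), ([A],psiV,[V,A],[A,V],[W]), ([A,V],psiW,[W,A],[A,W],[]),
     ([A],Delta,[V,W],[V,W],[A]), ([],psiV,[V,A],[A,V],[W,A]), ([V],psiW,[W,A],[A,W],[A]),
     ([],Delta,[V,W],[V,W],[A,A])]"
  apply (rule chain_swap_at[where n=2]; simp)
  apply (rule chain_rewrite_at[OF psiW_mu_diag[THEN chain_eq_sym], where n=1 and P="[V]" and Q="[]"]; simp)
  apply (rule chain_rewrite_at[OF psiV_mu_diag[THEN chain_eq_sym], where n=0 and P="[]" and Q="[W]"]; simp)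
  apply (rule chain_swap_at[where n=2]; simp)
  apply (rule chain_rewrite_at[OF Delta_psi_diag, where n=3 and P="[]" and Q="[A]"]; simp)
  done

lemma nabla_sigma_tensor_chain: "chain_mor [V,W,V,W]
    [([],mu,[A,A],[A],[V,W]), ([A],psiV,[V,A],[A,V],[W]), ([A,V],psiW,[W,A],[A,W],[]),
     ([A],Delta,[V,W],[V,W],[A]), ([A,V,W],eta,[],[A],[]), ([],mu,[A,A],[A],[V,W]),
     ([A],psiV,[V,A],[A,V],[W]), ([],sigmaV,[V,V],[A,V],[A,W]), ([V,V],sigmaW,[W,W],[A,W],[]),
     ([V],tau,[W,V],[V,W],[W])]
  = chain_mor [V,W,V,W]
    [([],mu,[A,A],[A],[V,W]), ([A],psiV,[V,A],[A,V],[W]), ([],sigmaV,[V,V],[A,V],[A,W]),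
     ([V,V],sigmaW,[W,W],[A,W],[]), ([V],tau,[W,V],[V,W],[W])]"
  apply (rule chain_swap_at[where n=3]; simp)
  apply (rule chain_rewrite_at[OF Delta_sigma_diag[THEN chain_eq_sym], where n=4 and P="[]" and Q="[]"]; simp)
  apply (rule chain_swap_at[where n=3]; simp)
  apply (rule chain_swap_at[where n=4]; simp)
  apply (rule chain_swap_at[where n=5]; simp)
  apply (rule chain_swap_at[where n=2]; simp)
  apply (rule chain_swap_at[where n=3]; simp)
  apply (rule chain_swap_at[where n=4]; simp)
  apply (rule chain_swap_at[where n=1]; simp)
  apply (rule chain_rewrite_at[OF mu_assoc_diag, where n=0 and P="[]" and Q="[V,W]"]; simp)
  apply (rule chain_rewrite_at[OF psiV_mu_diag, where n=1 and P="[A]" and Q="[W]"]; simp)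
  apply (rule chain_swap_at[where n=2]; simp)
  apply (rule chain_rewrite_at[OF nablaW_sigmaW_diag, where n=3 and P="[V,V]" and Q="[]"]; simp)
  done

lemma twisted_tensor_core: "chain_mor [V,W,V,W,A]
    [([],mu,[A,A],[A],[V,W]), ([A],psiV,[V,A],[A,V],[W]), ([A,V],psiW,[W,A],[A,W],[]),
     ([],mu,[A,A],[A],[V,W,A]), ([A],psiV,[V,A],[A,V],[W,A]), ([],sigmaV,[V,V],[A,V],[A,W,A]),
     ([V,V],sigmaW,[W,W],[A,W],[A]), ([V],tau,[W,V],[V,W],[W,A])]
  = chain_mor [V,W,V,W,A]
    [([],mu,[A,A],[A],[V,W]), ([A],mu,[A,A],[A],[V,W]), ([A,A],psiV,[V,A],[A,V],[W]),
     ([A],sigmaV,[V,V],[A,V],[A,W]), ([A,V,V],sigmaW,[W,W],[A,W],[]), ([A,V],tau,[W,V],[V,W],[W]),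
     ([],psiV,[V,A],[A,V],[W,V,W]), ([V],psiW,[W,A],[A,W],[V,W]), ([V,W],psiV,[V,A],[A,V],[W]),
     ([V,W,V],psiW,[W,A],[A,W],[])]"
  apply (rule chain_swap_at[where n=2]; simp)
  apply (rule chain_swap_at[where n=3]; simp)
  apply (rule chain_swap_at[where n=1]; simp)
  apply (rule chain_rewrite_at[OF mu_assoc_diag, where n=0 and P="[]" and Q="[V,W]"]; simp)
  apply (rule chain_rewrite_at[OF psiV_mu_diag, where n=1 and P="[A]" and Q="[W]"]; simp)
  apply (rule chain_swap_at[where n=3]; simp)
  apply (rule chain_swap_at[where n=2]; simp)
  apply (rule chain_rewrite_at[OF twistedW_diag, where n=3 and P="[V,V]" and Q="[]"]; simp)
  apply (rule chain_swap_at[where n=6]; simp)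
  apply (rule chain_rewrite_at[OF twistedV_diag, where n=0 and P="[]" and Q="[W]"]; simp)
  apply (rule chain_rewrite_at[OF psiV_mu_diag[THEN chain_eq_sym], where n=3 and P="[V]" and Q="[W]"]; simp)
  apply (rule chain_swap_at[where n=5]; simp)
  apply (rule chain_rewrite_at[OF tau_psi_diag, where n=6 and P="[V]" and Q="[W]"]; simp)
  apply (rule chain_rewrite_at[OF psiV_mu_diag[THEN chain_eq_sym], where n=2 and P="[]" and Q="[V,W]"]; simp)
  apply (rule chain_swap_at[where n=4]; simp)
  apply (rule chain_swap_at[where n=5]; simp)
  apply (rule chain_swap_at[where n=6]; simp)
  apply (rule chain_swap_at[where n=1]; simp)
  apply (rule chain_rewrite_at[OF mu_assoc_diag, where n=0 and P="[]" and Q="[V,W]"]; simp)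
  apply (rule chain_rewrite_at[OF twistedV_diag[THEN chain_eq_sym], where n=1 and P="[A]" and Q="[W]"]; simp)
  done

lemma twisted_tensor_core_diag: "chain_eq [V,W,V,W,A]
    [([],mu,[A,A],[A],[V,W]), ([A],psiV,[V,A],[A,V],[W]), ([A,V],psiW,[W,A],[A,W],[]),
     ([],mu,[A,A],[A],[V,W,A]), ([A],psiV,[V,A],[A,V],[W,A]), ([],sigmaV,[V,V],[A,V],[A,W,A]),
     ([V,V],sigmaW,[W,W],[A,W],[A]), ([V],tau,[W,V],[V,W],[W,A])]
    [([],mu,[A,A],[A],[V,W]), ([A],mu,[A,A],[A],[V,W]), ([A,A],psiV,[V,A],[A,V],[W]),
     ([A],sigmaV,[V,V],[A,V],[A,W]), ([A,V,V],sigmaW,[W,W],[A,W],[]), ([A,V],tau,[W,V],[V,W],[W]),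
     ([],psiV,[V,A],[A,V],[W,V,W]), ([V],psiW,[W,A],[A,W],[V,W]), ([V,W],psiV,[V,A],[A,V],[W]),
     ([V,W,V],psiW,[W,A],[A,W],[])]"
  using twisted_tensor_core unfolding chain_eq_def by simp

lemma twisted_tensor_chain: "chain_mor [V,W,V,W,A]
    [([],mu,[A,A],[A],[V,W]), ([A],psiV,[V,A],[A,V],[W]), ([A,V],psiW,[W,A],[A,W],[]),
     ([A],Delta,[V,W],[V,W],[A]), ([],mu,[A,A],[A],[V,W,A]), ([A],psiV,[V,A],[A,V],[W,A]),
     ([],sigmaV,[V,V],[A,V],[A,W,A]), ([V,V],sigmaW,[W,W],[A,W],[A]), ([V],tau,[W,V],[V,W],[W,A])]
  = chain_mor [V,W,V,W,A]
    [([],mu,[A,A],[A],[V,W]), ([A],mu,[A,A],[A],[V,W]), ([A,A],psiV,[V,A],[A,V],[W]),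
     ([A],sigmaV,[V,V],[A,V],[A,W]), ([A,V,V],sigmaW,[W,W],[A,W],[]), ([A,V],tau,[W,V],[V,W],[W]),
     ([],psiV,[V,A],[A,V],[W,V,W]), ([V],psiW,[W,A],[A,W],[V,W]), ([],Delta,[V,W],[V,W],[A,V,W]),
     ([V,W],psiV,[V,A],[A,V],[W]), ([V,W,V],psiW,[W,A],[A,W],[]), ([V,W],Delta,[V,W],[V,W],[A])]"
  apply (rule chain_rewrite_at[OF Delta_sigma_diag[THEN chain_eq_sym], where n=3 and P="[]" and Q="[A]"]; simp)
  apply (rule chain_rewrite_at[OF sigma_Delta_left_diag, where n=3 and P="[]" and Q="[A]"]; simp)
  apply (rule chain_rewrite_at[OF sigma_Delta_right_diag, where n=3 and P="[]" and Q="[A]"]; simp)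
  apply (rule chain_rewrite_at[OF twisted_tensor_core_diag, where n=0 and P="[]" and Q="[]"]; simp)
  apply (rule chain_swap_at[where n=10]; simp)
  apply (rule chain_swap_at[where n=9]; simp)
  apply (rule chain_swap_at[where n=8]; simp)
  done

lemma cocycle_tensor_lhs_via_cocycleV: "chain_mor [V,W,V,W,V,W]
    [([],mu,[A,A],[A],[V,W]), ([A],mu,[A,A],[A],[V,W]), ([A,A],psiV,[V,A],[A,V],[W]),
     ([A],sigmaV,[V,V],[A,V],[A,W]), ([A,V,V],sigmaW,[W,W],[A,W],[]), ([A,V],tau,[W,V],[V,W],[W]),
     ([],mu,[A,A],[A],[V,W,V,W]), ([A],psiV,[V,A],[A,V],[W,V,W]), ([],sigmaV,[V,V],[A,V],[A,W,V,W]),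
     ([V,V],sigmaW,[W,W],[A,W],[V,W]), ([V],tau,[W,V],[V,W],[W,V,W])]
  = chain_mor [V,W,V,W,V,W]
    [([],mu,[A,A],[A],[V,W]), ([A],psiV,[V,A],[A,V],[W]), ([],mu,[A,A],[A],[V,A,W]),
     ([A],sigmaV,[V,V],[A,V],[A,W]), ([],psiV,[V,A],[A,V],[V,A,W]), ([V,A,V],sigmaW,[W,W],[A,W],[]),
     ([V],mu,[A,A],[A],[V,W,W]), ([V,A],psiV,[V,A],[A,V],[W,W]), ([V,A,V],sigmaW,[W,W],[A,W],[W]),
     ([V,A],tau,[W,V],[V,W],[W,W]), ([V],psiW,[W,A],[A,W],[V,W,W]),
     ([V,W],sigmaV,[V,V],[A,V],[W,W]), ([V,W,V],tau,[W,V],[V,W],[W])]"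
  apply (rule chain_rewrite_at[OF twistedV_diag, where n=6 and P="[]" and Q="[W,V,W]"]; simp)
  apply (rule chain_swap_at[where n=5]; simp)
  apply (rule chain_swap_at[where n=4]; simp)
  apply (rule chain_swap_at[where n=3]; simp)
  apply (rule chain_swap_at[where n=2]; simp)
  apply (rule chain_swap_at[where n=1]; simp)
  apply (rule chain_swap_at[where n=6]; simp)
  apply (rule chain_swap_at[where n=5]; simp)
  apply (rule chain_rewrite_at[OF mu_assoc_diag, where n=0 and P="[]" and Q="[V,W]"]; simp)
  apply (rule chain_rewrite_at[OF mu_assoc_diag[THEN chain_eq_sym], where n=1 and P="[A]" and Q="[V,W]"]; simp)
  apply (rule chain_swap_at[where n=2]; simp)
  apply (rule chain_rewrite_at[OF cocycleV_diag, where n=3 and P="[A]" and Q="[A,W]"]; simp)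
  apply (rule chain_rewrite_at[OF mu_assoc_diag[THEN chain_eq_sym], where n=0 and P="[]" and Q="[V,W]"]; simp)
  apply (rule chain_swap_at[where n=1]; simp)
  apply (rule chain_rewrite_at[OF mu_assoc_diag[THEN chain_eq_sym], where n=2 and P="[]" and Q="[V,A,W]"]; simp)
  apply (rule chain_swap_at[where n=3]; simp)
  apply (rule chain_swap_at[where n=8]; simp)
  apply (rule chain_swap_at[where n=7]; simp)
  apply (rule chain_swap_at[where n=6]; simp)
  apply (rule chain_rewrite_at[OF psiV_mu_diag, where n=4 and P="[]" and Q="[V,A,W]"]; simp)
  apply (rule chain_swap_at[where n=6]; simp)
  apply (rule chain_swap_at[where n=5]; simp)
  apply (rule chain_swap_at[where n=8]; simp)
  apply (rule chain_rewrite_at[OF tau_sigma_diag, where n=6 and P="[V]" and Q="[W]"]; simp)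
  done

lemma cocycle_tensor_lhs_normal_form: "chain_mor [V,W,V,W,V,W]
    [([],mu,[A,A],[A],[V,W]), ([A],psiV,[V,A],[A,V],[W]), ([],mu,[A,A],[A],[V,A,W]),
     ([A],sigmaV,[V,V],[A,V],[A,W]), ([],psiV,[V,A],[A,V],[V,A,W]), ([V,A,V],sigmaW,[W,W],[A,W],[]),
     ([V],mu,[A,A],[A],[V,W,W]), ([V,A],psiV,[V,A],[A,V],[W,W]), ([V,A,V],sigmaW,[W,W],[A,W],[W]),
     ([V,A],tau,[W,V],[V,W],[W,W]), ([V],psiW,[W,A],[A,W],[V,W,W]),
     ([V,W],sigmaV,[V,V],[A,V],[W,W]), ([V,W,V],tau,[W,V],[V,W],[W])]
  = chain_mor [V,W,V,W,V,W]
    [([],mu,[A,A],[A],[V,W]), ([A],sigmaV,[V,V],[A,V],[W]), ([],psiV,[V,A],[A,V],[V,W]),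
     ([V],mu,[A,A],[A],[V,W]), ([V,A],psiV,[V,A],[A,V],[W]), ([V,A,V],mu,[A,A],[A],[W]),
     ([V,A,V,A],sigmaW,[W,W],[A,W],[]), ([V,A,V],sigmaW,[W,W],[A,W],[W]),
     ([V,A],tau,[W,V],[V,W],[W,W]), ([V],psiW,[W,A],[A,W],[V,W,W]),
     ([V,W],sigmaV,[V,V],[A,V],[W,W]), ([V,W,V],tau,[W,V],[V,W],[W])]"
  apply (rule chain_swap_at[where n=1]; simp)
  apply (rule chain_rewrite_at[OF mu_assoc_diag, where n=0 and P="[]" and Q="[V,W]"]; simp)
  apply (rule chain_rewrite_at[OF twistedV_diag, where n=1 and P="[A]" and Q="[W]"]; simp)
  apply (rule chain_swap_at[where n=4]; simp)
  apply (rule chain_rewrite_at[OF mu_assoc_diag[THEN chain_eq_sym], where n=0 and P="[]" and Q="[V,W]"]; simp)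
  apply (rule chain_swap_at[where n=1]; simp)
  apply (rule chain_rewrite_at[OF psiV_mu_diag, where n=2 and P="[]" and Q="[V,W]"]; simp)
  apply (rule chain_swap_at[where n=5]; simp)
  apply (rule chain_swap_at[where n=4]; simp)
  apply (rule chain_rewrite_at[OF mu_assoc_diag, where n=3 and P="[V]" and Q="[V,W]"]; simp)
  apply (rule chain_swap_at[where n=6]; simp)
  apply (rule chain_rewrite_at[OF psiV_mu_diag, where n=4 and P="[V,A]" and Q="[W]"]; simp)
  done

lemma cocycle_tensor_rhs_normal_form: "chain_mor [V,W,V,W,V,W]
    [([],mu,[A,A],[A],[V,W]), ([A],mu,[A,A],[A],[V,W]), ([A,A],psiV,[V,A],[A,V],[W]),
     ([A],sigmaV,[V,V],[A,V],[A,W]), ([A,V,V],sigmaW,[W,W],[A,W],[]), ([A,V],tau,[W,V],[V,W],[W]),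
     ([],psiV,[V,A],[A,V],[W,V,W]), ([V],psiW,[W,A],[A,W],[V,W]), ([V,W],mu,[A,A],[A],[V,W]),
     ([V,W,A],psiV,[V,A],[A,V],[W]), ([V,W],sigmaV,[V,V],[A,V],[A,W]),
     ([V,W,V,V],sigmaW,[W,W],[A,W],[]), ([V,W,V],tau,[W,V],[V,W],[W])]
  = chain_mor [V,W,V,W,V,W]
    [([],mu,[A,A],[A],[V,W]), ([A],sigmaV,[V,V],[A,V],[W]), ([],psiV,[V,A],[A,V],[V,W]),
     ([V],mu,[A,A],[A],[V,W]), ([V,A],psiV,[V,A],[A,V],[W]), ([V,A,V],mu,[A,A],[A],[W]),
     ([V,A,V,A],sigmaW,[W,W],[A,W],[]), ([V,A,V],sigmaW,[W,W],[A,W],[W]),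
     ([V,A],tau,[W,V],[V,W],[W,W]), ([V],psiW,[W,A],[A,W],[V,W,W]),
     ([V,W],sigmaV,[V,V],[A,V],[W,W]), ([V,W,V],tau,[W,V],[V,W],[W])]"
  apply (rule chain_rewrite_at[OF psiW_mu_diag[THEN chain_eq_sym], where n=7 and P="[V]" and Q="[V,W]"]; simp)
  apply (rule chain_swap_at[where n=5]; simp)
  apply (rule chain_swap_at[where n=6]; simp)
  apply (rule chain_swap_at[where n=9]; simp)
  apply (rule chain_rewrite_at[OF tau_psi_diag[THEN chain_eq_sym], where n=7 and P="[V,A]" and Q="[W]"]; simp)
  apply (rule chain_rewrite_at[OF twistedV_diag, where n=1 and P="[A]" and Q="[W]"]; simp)
  apply (rule chain_swap_at[where n=5]; simp)
  apply (rule chain_swap_at[where n=4]; simp)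
  apply (rule chain_rewrite_at[OF mu_assoc_diag[THEN chain_eq_sym], where n=0 and P="[]" and Q="[V,W]"]; simp)
  apply (rule chain_swap_at[where n=1]; simp)
  apply (rule chain_rewrite_at[OF psiV_mu_diag, where n=2 and P="[]" and Q="[V,W]"]; simp)
  apply (rule chain_swap_at[where n=5]; simp)
  apply (rule chain_swap_at[where n=4]; simp)
  apply (rule chain_rewrite_at[OF mu_assoc_diag, where n=3 and P="[V]" and Q="[V,W]"]; simp)
  apply (rule chain_swap_at[where n=6]; simp)
  apply (rule chain_rewrite_at[OF psiV_mu_diag, where n=4 and P="[V,A]" and Q="[W]"]; simp)
  apply (rule chain_swap_at[where n=10]; simp)
  apply (rule chain_swap_at[where n=9]; simp)
  apply (rule chain_swap_at[where n=8]; simp)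
  apply (rule chain_rewrite_at[OF cocycleW_diag[THEN chain_eq_sym], where n=5 and P="[V,A,V]" and Q="[]"]; simp)
  done

lemma cocycle_tensor_core_diag: "chain_eq [V,W,V,W,V,W]
    [([],mu,[A,A],[A],[V,W]), ([A],mu,[A,A],[A],[V,W]), ([A,A],psiV,[V,A],[A,V],[W]),
     ([A],sigmaV,[V,V],[A,V],[A,W]), ([A,V,V],sigmaW,[W,W],[A,W],[]), ([A,V],tau,[W,V],[V,W],[W]),
     ([],mu,[A,A],[A],[V,W,V,W]), ([A],psiV,[V,A],[A,V],[W,V,W]), ([],sigmaV,[V,V],[A,V],[A,W,V,W]),
     ([V,V],sigmaW,[W,W],[A,W],[V,W]), ([V],tau,[W,V],[V,W],[W,V,W])]
    [([],mu,[A,A],[A],[V,W]), ([A],mu,[A,A],[A],[V,W]), ([A,A],psiV,[V,A],[A,V],[W]),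
     ([A],sigmaV,[V,V],[A,V],[A,W]), ([A,V,V],sigmaW,[W,W],[A,W],[]), ([A,V],tau,[W,V],[V,W],[W]),
     ([],psiV,[V,A],[A,V],[W,V,W]), ([V],psiW,[W,A],[A,W],[V,W]), ([V,W],mu,[A,A],[A],[V,W]),
     ([V,W,A],psiV,[V,A],[A,V],[W]), ([V,W],sigmaV,[V,V],[A,V],[A,W]),
     ([V,W,V,V],sigmaW,[W,W],[A,W],[]), ([V,W,V],tau,[W,V],[V,W],[W])]"
  using cocycle_tensor_lhs_via_cocycleV cocycle_tensor_lhs_normal_form cocycle_tensor_rhs_normal_form
  unfolding chain_eq_def by simp

lemma cocycle_tensor_chain: "chain_mor [V,W,V,W,V,W]
    [([],mu,[A,A],[A],[V,W]), ([A],mu,[A,A],[A],[V,W]), ([A,A],psiV,[V,A],[A,V],[W]),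
     ([A],sigmaV,[V,V],[A,V],[A,W]), ([A,V,V],sigmaW,[W,W],[A,W],[]), ([A,V],tau,[W,V],[V,W],[W]),
     ([],mu,[A,A],[A],[V,W,V,W]), ([A],psiV,[V,A],[A,V],[W,V,W]), ([],sigmaV,[V,V],[A,V],[A,W,V,W]),
     ([V,V],sigmaW,[W,W],[A,W],[V,W]), ([V],tau,[W,V],[V,W],[W,V,W])]
  = chain_mor [V,W,V,W,V,W]
    [([],mu,[A,A],[A],[V,W]), ([A],mu,[A,A],[A],[V,W]), ([A,A],psiV,[V,A],[A,V],[W]),
     ([A],sigmaV,[V,V],[A,V],[A,W]), ([A,V,V],sigmaW,[W,W],[A,W],[]), ([A,V],tau,[W,V],[V,W],[W]),
     ([],psiV,[V,A],[A,V],[W,V,W]), ([V],psiW,[W,A],[A,W],[V,W]), ([],Delta,[V,W],[V,W],[A,V,W]),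
     ([V,W],mu,[A,A],[A],[V,W]), ([V,W,A],psiV,[V,A],[A,V],[W]), ([V,W],sigmaV,[V,V],[A,V],[A,W]),
     ([V,W,V,V],sigmaW,[W,W],[A,W],[]), ([V,W,V],tau,[W,V],[V,W],[W])]"
  apply (rule chain_rewrite_at[OF sigma_Delta_left_diag, where n=6 and P="[]" and Q="[V,W]"]; simp)
  apply (rule chain_rewrite_at[OF sigma_Delta_right_diag, where n=6 and P="[]" and Q="[V,W]"]; simp)
  apply (rule chain_rewrite_at[OF sigma_Delta_right_diag, where n=1 and P="[A]" and Q="[]"]; simp)
  apply (rule chain_swap_at[where n=6]; simp)
  apply (rule chain_swap_at[where n=7]; simp)
  apply (rule chain_swap_at[where n=8]; simp)
  apply (rule chain_swap_at[where n=9]; simp)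
  apply (rule chain_swap_at[where n=10]; simp)
  apply (rule chain_rewrite_at[OF cocycle_tensor_core_diag, where n=0 and P="[]" and Q="[]"]; simp)
  apply (rule chain_rewrite_at[OF sigma_Delta_right_diag[THEN chain_eq_sym], where n=8 and P="[V,W]" and Q="[]"]; simp)
  apply (rule chain_rewrite_at[OF sigma_Delta_left_diag[THEN chain_eq_sym], where n=8 and P="[V,W]" and Q="[]"]; simp)
  apply (rule chain_swap_at[where n=12]; simp)
  apply (rule chain_swap_at[where n=11]; simp)
  apply (rule chain_swap_at[where n=10]; simp)
  apply (rule chain_swap_at[where n=9]; simp)
  apply (rule chain_swap_at[where n=8]; simp)
  done

lemma twisted_tensor: "twisted A eta mu (V \<odot> W) psiVW sigmaVW"
  using twisted_tensor_chain unfolding twisted_def psi_tensor_def sigma_tensor_def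
  by (simp add: chain_mor_unfold tensor_as_comp[of sigmaV sigmaW])

lemma cocycle_tensor: "cocycle A eta mu (V \<odot> W) psiVW sigmaVW"
  using cocycle_tensor_chain unfolding cocycle_def psi_tensor_def sigma_tensor_def
  by (simp add: chain_mor_unfold tensor_as_comp[of sigmaV sigmaW])

lemma nabla_sigma_tensor: "nabla A eta mu (V \<odot> W) psiVW \<cdot> sigmaVW = sigmaVW"
  using nabla_sigma_tensor_chain unfolding nabla_def psi_tensor_def sigma_tensor_def
  by (simp add: chain_mor_unfold tensor_as_comp[of sigmaV sigmaW])

lemma psi_tensor_mu:
  "(mu \<otimes> I (V \<odot> W)) \<cdot> (I A \<otimes> psiVW) \<cdot> (psiVW \<otimes> I A) = psiVW \<cdot> (I (V \<odot> W) \<otimes> mu)"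
  using psi_tensor_mu_chain unfolding psi_tensor_def
  by (simp add: chain_mor_unfold)

lemma quadruple_tensor: "quadruple A eta mu (V \<odot> W) psiVW sigmaVW"
  using quadrupleV psi_tensor_mu nabla_sigma_tensor
  by (simp add: quadruple_def hom_def psi_tensor_def sigma_tensor_def)

lemma weak_crossed_product_tensor: "weak_crossed_product A eta mu (V \<odot> W) psiVW sigmaVW"
  using quadruple_tensor twisted_tensor cocycle_tensor unfolding weak_crossed_product_def by simp

end

theorem mainTheorem2:
  fixes C :: "('o, 'm) smcat"
    and A V W :: 'o and eta mu psiV sigmaV psiW sigmaW Delta tau :: 'm
  assumes "strict_monoidal_cat C"
    and "strict_monoidal_cat.quadruple C A eta mu V psiV sigmaV"
    and "strict_monoidal_cat.quadruple C A eta mu W psiW sigmaW"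
    and "strict_monoidal_cat.twisted C A eta mu V psiV sigmaV"
    and "strict_monoidal_cat.cocycle C A eta mu V psiV sigmaV"
    and "strict_monoidal_cat.twisted C A eta mu W psiW sigmaW"
    and "strict_monoidal_cat.cocycle C A eta mu W psiW sigmaW"
    and "strict_monoidal_cat.link_morphism C A eta mu V psiV W psiW Delta"
    and "strict_monoidal_cat.twisting_morphism C A mu V psiV sigmaV W psiW sigmaW tau"
    and "strict_monoidal_cat.sigma_tensor C A mu V psiV sigmaV W sigmaW tau
           = c_cmp C (strict_monoidal_cat.sigma_tensor C A mu V psiV sigmaV W sigmaW tau)
                     (c_tmor C Delta (c_idm C (c_tobj C V W)))"
    and "strict_monoidal_cat.sigma_tensor C A mu V psiV sigmaV W sigmaW tau
           = c_cmp C (strict_monoidal_cat.sigma_tensor C A mu V psiV sigmaV W sigmaW tau)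
                     (c_tmor C (c_idm C (c_tobj C V W)) Delta)"
    and "strict_monoidal_cat.sigma_tensor C A mu V psiV sigmaV W sigmaW tau
           = c_cmp C (c_tmor C (c_idm C A) Delta)
                     (strict_monoidal_cat.sigma_tensor C A mu V psiV sigmaV W sigmaW tau)"
  shows "strict_monoidal_cat.twisted C A eta mu (c_tobj C V W)
            (strict_monoidal_cat.psi_tensor C A V W psiV psiW Delta)
            (strict_monoidal_cat.sigma_tensor C A mu V psiV sigmaV W sigmaW tau)
       \<and> strict_monoidal_cat.cocycle C A eta mu (c_tobj C V W)
            (strict_monoidal_cat.psi_tensor C A V W psiV psiW Delta)
            (strict_monoidal_cat.sigma_tensor C A mu V psiV sigmaV W sigmaW tau)
       \<and> c_cmp C (strict_monoidal_cat.nabla C A eta mu (c_tobj C V W)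
                   (strict_monoidal_cat.psi_tensor C A V W psiV psiW Delta))
                (strict_monoidal_cat.sigma_tensor C A mu V psiV sigmaV W sigmaW tau)
            = strict_monoidal_cat.sigma_tensor C A mu V psiV sigmaV W sigmaW tau
       \<and> strict_monoidal_cat.weak_crossed_product C A eta mu (c_tobj C V W)
            (strict_monoidal_cat.psi_tensor C A V W psiV psiW Delta)
            (strict_monoidal_cat.sigma_tensor C A mu V psiV sigmaV W sigmaW tau)"
proof -
  interpret strict_monoidal_cat C by (fact assms(1))
  interpret tensor_of_quadruples C A V W eta mu psiV sigmaV psiW sigmaW Delta tau
    by unfold_locales (use assms in \<open>simp_all add: link_morphism_def\<close>)
  show ?thesis
    using twisted_tensor cocycle_tensor nabla_sigma_tensor weak_crossed_product_tensor by blast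
qed

end
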